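(* Let $q$ be a prime power, $n=q^4-1$, and let $I_x=\{x,y\}$ be a cyclotomic coset of cardinality $2$ whose minimal representative is $x=(a_0,a_1,a_2,a_3)$. Then $qx>qy$ if and only if $a_2>a_0$, or $a_2=a_0$ and $a_1>a_3$; and $qx<qy$ if and only if $a_2<a_0$, or $a_2=a_0$ and $a_1<a_3$ (where $qx,qy$ are reduced modulo $n$ into $\{0,\ldots,n-1\}$).
   Context: Identify $\mathbb{Z}_n$ with $\{0,\ldots,n-1\}$. The $q$-adic 4-tuple $(a_0,a_1,a_2,a_3)$ denotes $a_0+a_1q+a_2q^2+a_3q^3$ with $0\le a_i<q$. The cyclotomic coset of $x$ with respect to $q^2$ is $I_x=\{x,\,q^2x\bmod n\}$; its minimal representative is its least element. *)

theory Defs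
  imports "HOL-Computational_Algebra.Primes"
begin

definition prime_power :: "nat \<Rightarrow> bool" where
  "prime_power q \<longleftrightarrow> (\<exists>p k. prime p \<and> k \<ge> 1 \<and> q = p ^ k)"

definition cyc_coset :: "nat \<Rightarrow> nat \<Rightarrow> nat set" where
  "cyc_coset q x = {x, (q^2 * x) mod (q^4 - 1)}"

definition qdigit :: "nat \<Rightarrow> nat \<Rightarrow> nat \<Rightarrow> nat" where
  "qdigit q x i = (x div q ^ i) mod q"

end

theory Submission
  imports Defs
begin

text \<open>Write \<open>x = (a\<^sub>0, a\<^sub>1, a\<^sub>2, a\<^sub>3)\<close> in base \<open>q\<close>. Since \<open>q\<^sup>4 \<equiv> 1 (mod n)\<close>, multiplication by \<open>q\<close>
  modulo \<open>n = q\<^sup>4 - 1\<close> rotates the digits cyclically, so \<open>qx = (a\<^sub>3, a\<^sub>0, a\<^sub>1, a\<^sub>2)\<close>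
  and, as \<open>y = q\<^sup>2x mod n\<close>, \<open>qy = (a\<^sub>1, a\<^sub>2, a\<^sub>3, a\<^sub>0)\<close>. Comparing these from the top digit down is
  the stated criterion; the case \<open>a\<^sub>2 = a\<^sub>0 \<and> a\<^sub>1 = a\<^sub>3\<close> is excluded because it would give
  \<open>y = x\<close>, contradicting \<open>card I\<^sub>x = 2\<close>.\<close>

definition qadic4 :: "nat \<Rightarrow> nat \<Rightarrow> nat \<Rightarrow> nat \<Rightarrow> nat \<Rightarrow> nat" where
  "qadic4 q a b c d = a + q * (b + q * (c + q * d))"

lemma digit_add_mult_eq_iff:
  fixes q a b X Y :: nat
  assumes "a < q" "b < q"
  shows "a + q * X = b + q * Y \<longleftrightarrow> a = b \<and> X = Y"
proof
  assume eq: "a + q * X = b + q * Y"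
  from arg_cong[where f = "\<lambda>m. m mod q", OF eq] have "a = b"
    using assms by simp
  moreover from arg_cong[where f = "\<lambda>m. m div q", OF eq] have "X = Y"
    using assms by simp
  ultimately show "a = b \<and> X = Y" ..
qed simp

lemma digit_add_mult_less_iff:
  fixes q a b X Y :: nat
  assumes "a < q" "b < q"
  shows "a + q * X < b + q * Y \<longleftrightarrow> X < Y \<or> X = Y \<and> a < b"
proof -
  have carry: "a + q * X < b + q * Y" if "a < q" "X < Y" for a b X Y :: nat
  proof -
    have "q * (X + 1) \<le> q * Y" using that(2) by (intro mult_le_mono2) simp
    with that(1) show ?thesis by (simp add: algebra_simps)
  qed
  show ?thesis
  proof (cases X Y rule: linorder_cases)
    case less
    then show ?thesis using carry[OF assms(1), of X Y b] by auto
  next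
    case equal
    then show ?thesis by simp
  next
    case greater
    then show ?thesis using carry[OF assms(2), of Y X a] by auto
  qed
qed

lemma qadic4_eq_iff:
  assumes "a < q" "b < q" "c < q" "a' < q" "b' < q" "c' < q"
  shows "qadic4 q a b c d = qadic4 q a' b' c' d' \<longleftrightarrow> a = a' \<and> b = b' \<and> c = c' \<and> d = d'"
  using assms unfolding qadic4_def
  by (simp add: digit_add_mult_eq_iff)

lemma qadic4_less_iff:
  assumes "a < q" "b < q" "c < q" "a' < q" "b' < q" "c' < q"
  shows "qadic4 q a b c d < qadic4 q a' b' c' d' \<longleftrightarrow>
    d < d' \<or> d = d' \<and> (c < c' \<or> c = c' \<and> (b < b' \<or> b = b' \<and> a < a'))"
  using assms unfolding qadic4_def
  by (simp add: digit_add_mult_less_iff digit_add_mult_eq_iff) blast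

lemma div_power_eq_qdigit:
  fixes q x i :: nat
  shows "x div q ^ i = qdigit q x i + q * (x div q ^ Suc i)"
  unfolding qdigit_def power_Suc2 div_mult2_eq by simp

lemma qadic4_qdigits:
  fixes q x :: nat
  assumes "x < q ^ 4"
  shows "x = qadic4 q (qdigit q x 0) (qdigit q x 1) (qdigit q x 2) (qdigit q x 3)"
proof -
  have "x div q ^ 4 = 0" using assms by simp
  then have "x div q ^ 3 = qdigit q x 3"
    using div_power_eq_qdigit[of x q 3] by simp
  then show ?thesis
    using div_power_eq_qdigit[of x q 0] div_power_eq_qdigit[of x q 1]
      div_power_eq_qdigit[of x q 2]
    unfolding qadic4_def by (simp add: numeral_eq_Suc)
qed

lemma qadic4_all_max:
  fixes q :: nat
  assumes "q \<ge> 1"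
  shows "qadic4 q (q - 1) (q - 1) (q - 1) (q - 1) = q ^ 4 - 1"
proof -
  obtain r where "q = Suc r" using assms by (cases q) auto
  then show ?thesis unfolding qadic4_def by (simp add: algebra_simps power_def)
qed

lemma mult_qadic4_mod_rotate:
  fixes q a b c d :: nat
  assumes digits: "a < q" "b < q" "c < q" "d < q"
    and less: "qadic4 q a b c d < q ^ 4 - 1"
  shows "(q * qadic4 q a b c d) mod (q ^ 4 - 1) = qadic4 q d a b c"
proof -
  have q1: "q \<ge> 1" using digits by simp
  have "qadic4 q d a b c \<le> qadic4 q (q - 1) (q - 1) (q - 1) (q - 1)"
    using digits unfolding qadic4_def by (intro add_mono mult_le_mono) auto
  moreover have "qadic4 q d a b c \<noteq> qadic4 q (q - 1) (q - 1) (q - 1) (q - 1)"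
  proof
    assume "qadic4 q d a b c = qadic4 q (q - 1) (q - 1) (q - 1) (q - 1)"
    then have "a = q - 1 \<and> b = q - 1 \<and> c = q - 1 \<and> d = q - 1"
      using digits by (subst (asm) qadic4_eq_iff) auto
    with less show False using qadic4_all_max[OF q1] by simp
  qed
  ultimately have rot_less: "qadic4 q d a b c < q ^ 4 - 1"
    using qadic4_all_max[OF q1] by simp
  have "q * qadic4 q a b c d + d = d * q ^ 4 + qadic4 q d a b c"
    unfolding qadic4_def by (simp add: algebra_simps power_def)
  then have "q * qadic4 q a b c d = d * (q ^ 4 - 1) + qadic4 q d a b c"
    using q1 by (simp add: diff_mult_distrib2 algebra_simps)
  with rot_less show ?thesis by simp
qed

lemma cyc_coset_card_2_other:
  assumes "cyc_coset q x = {x, y}" "card (cyc_coset q x) = 2"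
  shows "y = (q ^ 2 * x) mod (q ^ 4 - 1)" "y \<noteq> x"
  using assms unfolding cyc_coset_def by (auto simp: card_insert_if split: if_splits)

theorem mainTheorem11:
  fixes q x y :: nat
  assumes "prime_power q"
    and "x < q^4 - 1"
    and "cyc_coset q x = {x, y}"
    and "card (cyc_coset q x) = 2"
    and "Min (cyc_coset q x) = x"
  shows "((q * x) mod (q^4 - 1) > (q * y) mod (q^4 - 1) \<longleftrightarrow>
            qdigit q x 2 > qdigit q x 0 \<or>
            (qdigit q x 2 = qdigit q x 0 \<and> qdigit q x 1 > qdigit q x 3))
       \<and> ((q * x) mod (q^4 - 1) < (q * y) mod (q^4 - 1) \<longleftrightarrow>
            qdigit q x 2 < qdigit q x 0 \<or>
            (qdigit q x 2 = qdigit q x 0 \<and> qdigit q x 1 < qdigit q x 3))"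
proof -
  define n where "n = q ^ 4 - 1"
  define a0 a1 a2 a3 where
    "a0 = qdigit q x 0" "a1 = qdigit q x 1" "a2 = qdigit q x 2" "a3 = qdigit q x 3"
  have "q > 0" using assms(2) by (cases q) auto
  then have digits: "a0 < q" "a1 < q" "a2 < q" "a3 < q"
    unfolding a0_a1_a2_a3_def qdigit_def by simp_all
  have x: "x = qadic4 q a0 a1 a2 a3"
    using qadic4_qdigits[of x q] assms(2) unfolding a0_a1_a2_a3_def by simp
  have "n > 0" using assms(2) n_def by simp
  have rotate: "(q * (m mod n)) mod n = qadic4 q d a b c"
    if "m mod n = qadic4 q a b c d" "a < q" "b < q" "c < q" "d < q" for m a b c d
    using that mult_qadic4_mod_rotate[of a q b c d] mod_less_divisor[OF \<open>n > 0\<close>, of m]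
    unfolding n_def by simp
  have qx: "(q * x) mod n = qadic4 q a3 a0 a1 a2"
    using rotate[of x] x digits assms(2) n_def by simp
  have q2x: "(q ^ 2 * x) mod n = qadic4 q a2 a3 a0 a1"
    using rotate[OF qx] digits by (simp add: power2_eq_square mod_mult_right_eq mult.assoc)
  have y: "y = (q ^ 2 * x) mod n" "y \<noteq> x"
    using cyc_coset_card_2_other[OF assms(3,4)] unfolding n_def by simp_all
  have qy: "(q * y) mod n = qadic4 q a1 a2 a3 a0"
    using rotate[OF q2x] digits y(1) by simp
  have "\<not> (a2 = a0 \<and> a3 = a1)"
    using y q2x x digits qadic4_eq_iff by auto
  with digits show ?thesis
    unfolding n_def[symmetric] qx qy a0_a1_a2_a3_def[symmetric]
    by (auto simp: qadic4_less_iff)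
qed

end
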